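(* For every $n\ge2$, \[\sum_{\pi\in\mathcal{A}_n}\mathbf{x}^{\mathrm{cDes}(\pi)}=\sum_{k=0}^{n-2}\ \sum_{T\in\mathrm{SYT}((n-k-1,1^k)\oplus(1))}\mathbf{x}^{\mathrm{cDes}(T)}.\]
   Context: $\mathcal{A}_n$ is the set of arc permutations: $\pi\in\mathfrak{S}_n$ (one-line notation) such that for every $1\le j\le n$, $\{\pi(1),\dots,\pi(j)\}$ is an interval in $\mathbb{Z}_n$ (a set of cyclically consecutive residues). For $\pi\in\mathfrak{S}_n$, $\mathrm{cDes}(\pi)=\{i\in[n]:\pi(i)>\pi(i+1)\}$ with $\pi(n+1):=\pi(1)$, and $\mathbf{x}^J=\prod_{i\in J}x_i$. The skew shape $(n-k-1,1^k)\oplus(1)$ consists of two connected components: the hook $(n-k-1,1^k)$ and a single cell placed strictly northeast of it (in a row above and a column to the right of all cells of the hook). A standard Young tableau $T$ of this shape (English notation: rows and columns increasing) has descent set $\mathrm{Des}(T)$, the set of $i\in[n-1]$ such that $i+1$ is in a strictly lower row than $i$, and cyclic descent set $\mathrm{cDes}(T)=\mathrm{Des}(T)\cup\{n\}$ if $|\mathrm{Des}(T)|=k$, and $\mathrm{cDes}(T)=\mathrm{Des}(T)$ otherwise. *)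

theory Defs
  imports "HOL-Combinatorics.Permutations"
begin

text \<open>Residues of Z_n are represented by 1..n. A subset of {1..n} is a cyclic
interval if it consists of l cyclically consecutive residues (0 \<le> l \<le> n).\<close>
definition cyc_interval :: "nat \<Rightarrow> nat set \<Rightarrow> bool" where
  "cyc_interval n S \<longleftrightarrow> (\<exists>a l. l \<le> n \<and> S = {(a + i) mod n + 1 | i. i < l})"

definition arc_perms :: "nat \<Rightarrow> (nat \<Rightarrow> nat) set" where
  "arc_perms n = {\<pi>. \<pi> permutes {1..n} \<and> (\<forall>j\<in>{1..n}. cyc_interval n (\<pi> ` {1..j}))}"

definition cDes_perm :: "nat \<Rightarrow> (nat \<Rightarrow> nat) \<Rightarrow> nat set" where
  "cDes_perm n \<pi> = {i \<in> {1..n}. \<pi> i > \<pi> (if i = n then 1 else i + 1)}"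

definition monom_x :: "(nat \<Rightarrow> 'a::comm_ring_1) \<Rightarrow> nat set \<Rightarrow> 'a" where
  "monom_x x J = (\<Prod>i\<in>J. x i)"

text \<open>Cells (row, column), English notation (rows numbered downward), of the skew
shape (n-k-1,1^k) \<oplus> (1): the hook occupies rows 1..k+1, with first row
columns 1..n-k-1 and first column rows 1..k+1; the single extra cell sits in
row 0 and column n-k, i.e. strictly north-east of the hook.\<close>
definition hook_plus_cell :: "nat \<Rightarrow> nat \<Rightarrow> (nat \<times> nat) set" where
  "hook_plus_cell n k =
     {(1, c) | c. 1 \<le> c \<and> c \<le> n - k - 1} \<union> {(r, 1) | r. 2 \<le> r \<and> r \<le> k + 1} \<union> {(0, n - k)}"

definition SYT :: "nat \<Rightarrow> (nat \<times> nat) set \<Rightarrow> ((nat \<times> nat) \<Rightarrow> nat) set" where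
  "SYT n D = {T. bij_betw T D {1..n} \<and> (\<forall>c. c \<notin> D \<longrightarrow> T c = 0) \<and>
      (\<forall>r c c'. (r, c) \<in> D \<and> (r, c') \<in> D \<and> c < c' \<longrightarrow> T (r, c) < T (r, c')) \<and>
      (\<forall>r r' c. (r, c) \<in> D \<and> (r', c) \<in> D \<and> r < r' \<longrightarrow> T (r, c) < T (r', c))}"

definition row_of :: "(nat \<times> nat) set \<Rightarrow> ((nat \<times> nat) \<Rightarrow> nat) \<Rightarrow> nat \<Rightarrow> nat" where
  "row_of D T i = fst (THE p. p \<in> D \<and> T p = i)"

definition Des_T :: "nat \<Rightarrow> (nat \<times> nat) set \<Rightarrow> ((nat \<times> nat) \<Rightarrow> nat) \<Rightarrow> nat set" where
  "Des_T n D T = {i \<in> {1..n - 1}. row_of D T (i + 1) > row_of D T i}"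

definition cDes_T :: "nat \<Rightarrow> nat \<Rightarrow> ((nat \<times> nat) \<Rightarrow> nat) \<Rightarrow> nat set" where
  "cDes_T n k T = (let d = Des_T n (hook_plus_cell n k) T in
     if card d = k then d \<union> {n} else d)"

end

theory Submission
  imports Defs
begin

text \<open>Both sides enumerate the pairs (v, J) with v \<in> [n], J \<subseteq> [n], v \<in> J and the cyclic
  predecessor of v not in J, each pair weighted by x^J.

  An arc permutation \<pi> gives the pair (v, cDes \<pi>) with \<pi>(v) = n.  For j < v the value sets
  \<pi>{1..j}, and for j > v the sets \<pi>{j..n}, are cyclic intervals avoiding n, hence ordinary
  intervals of [n-1].  So each letter is the smallest or the largest element of its set, and the
  adjacent descent decides which; starting from \<pi>{1..v-1}, the lower or the upper interval of [n-1]
  according to whether n \<in> cDes \<pi>, this rebuilds \<pi> from the pair.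

  A tableau T of shape (n-k-1, 1^k) \<oplus> (1) is determined by the entry v of the single cell and the
  set L of entries of the leg.  Its descents are v (unless v = n) and the i with i + 1 \<in> L, so
  cDes T consists of these i together with v, or with n if v is not a descent.  Conversely L is recovered from J as
  the shift of J minus its distinguished element (n if n \<in> J, else v), whose size is k; summing over
  k = 0, ..., n-2 gives all pairs.\<close>

section \<open>Intervals and cyclic intervals\<close>

definition nat_interval :: "nat set \<Rightarrow> bool" where
  "nat_interval X \<longleftrightarrow> (\<exists>a b. X = {a..b})"

lemma nat_interval_atLeastAtMost [simp]: "nat_interval {a..b}"
  unfolding nat_interval_def by blast

lemma nat_interval_empty [simp]: "nat_interval {}"
  using nat_interval_atLeastAtMost[of 1 0] by simp

lemma nat_interval_finite: "nat_interval X \<Longrightarrow> finite X"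
  unfolding nat_interval_def by auto

lemma Min_atLeastAtMost: "a \<le> b \<Longrightarrow> Min {a..b} = (a::nat)"
  by (simp add: Min_eq_iff)

lemma Max_atLeastAtMost: "a \<le> b \<Longrightarrow> Max {a..b} = (b::nat)"
  by (simp add: Max_eq_iff)

lemma nat_interval_Diff_Min: "nat_interval X \<Longrightarrow> nat_interval (X - {Min X})"
proof -
  assume "nat_interval X"
  then obtain a b where X: "X = {a..b}" unfolding nat_interval_def by blast
  show ?thesis
  proof (cases "a \<le> b")
    case True
    then have "X - {Min X} = {Suc a..b}" using X Min_atLeastAtMost by auto
    then show ?thesis by simp
  qed (use X in simp)
qed

lemma nat_interval_Diff_Max: "nat_interval X \<Longrightarrow> nat_interval (X - {Max X})"
proof -
  assume "nat_interval X"
  then obtain a b where X: "X = {a..b}" unfolding nat_interval_def by blast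
  show ?thesis
  proof (cases "a < b")
    case True
    then have "X - {Max X} = {a..b - 1}" using X Max_atLeastAtMost by auto
    then show ?thesis by simp
  next
    case False
    then have "X = {} \<or> X = {b}" using X by auto
    then show ?thesis by (elim disjE) simp_all
  qed
qed

definition Min_or_Max :: "bool \<Rightarrow> nat set \<Rightarrow> nat" where
  "Min_or_Max b X = (if b then Min X else Max X)"

lemma Min_or_Max_in: "finite X \<Longrightarrow> X \<noteq> {} \<Longrightarrow> Min_or_Max b X \<in> X"
  unfolding Min_or_Max_def by simp

lemma nat_interval_Diff_Min_or_Max: "nat_interval X \<Longrightarrow> nat_interval (X - {Min_or_Max b X})"
  unfolding Min_or_Max_def using nat_interval_Diff_Min nat_interval_Diff_Max by simp

lemma Min_or_Max_less_iff:
  assumes "finite X" "y \<in> X" "y \<noteq> Min_or_Max b X"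
  shows "Min_or_Max b X < y \<longleftrightarrow> b"
proof (cases b)
  case True
  have "Min X \<le> y" using assms(1,2) by simp
  then show ?thesis using True assms(3) unfolding Min_or_Max_def by auto
next
  case False
  have "y \<le> Max X" using assms(1,2) by simp
  then show ?thesis using False assms(3) unfolding Min_or_Max_def by auto
qed

lemma nat_interval_Diff_singleton:
  assumes "nat_interval X" "nat_interval (X - {x})" "x \<in> X" "y \<in> X" "y \<noteq> x"
  shows "x = Min_or_Max (x < y) X"
proof -
  obtain a b where X: "X = {a..b}" using assms(1) unfolding nat_interval_def by blast
  obtain c d where Y: "X - {x} = {c..d}" using assms(2) unfolding nat_interval_def by blast
  have "x = a \<or> x = b"
  proof (rule ccontr)
    assume "\<not> (x = a \<or> x = b)"
    then have "a \<in> X - {x}" "b \<in> X - {x}" using X assms(3) by auto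
    then have "c \<le> a" "b \<le> d" using Y by auto
    then have "x \<in> {c..d}" using X assms(3) by auto
    then show False by (simp add: Y[symmetric])
  qed
  moreover have "a \<le> y" "y \<le> b" "a \<le> b" using X assms(4) by auto
  ultimately show ?thesis
    using X assms(5) Min_atLeastAtMost Max_atLeastAtMost unfolding Min_or_Max_def by auto
qed

lemma nat_interval_complement_cases:
  assumes "nat_interval X" "nat_interval ({1..m} - X)" "X \<subseteq> {1..m}"
  shows "X = {1..card X} \<or> X = {Suc m - card X..m}"
proof -
  obtain a b where X: "X = {a..b}" using assms(1) unfolding nat_interval_def by blast
  obtain c d where C: "{1..m} - X = {c..d}" using assms(2) unfolding nat_interval_def by blast
  consider "b < a" | "a = 1" | "b = m" | "1 < a" "a \<le> b" "b < m"
    using X assms(3) by fastforce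
  then show ?thesis
  proof cases
    case 4
    then have "1 \<in> {c..d}" "m \<in> {c..d}" using X C[symmetric] by auto
    then have "a \<in> {c..d}" using 4 by auto
    then show ?thesis using X C[symmetric] 4 by auto
  qed (use X in auto)
qed

lemma cyc_interval_subset: "cyc_interval n S \<Longrightarrow> S \<subseteq> {1..n}"
  unfolding cyc_interval_def by (auto simp: Suc_le_eq)

lemma cyc_interval_atLeastAtMost:
  assumes "1 \<le> a" "b \<le> n"
  shows "cyc_interval n {a..b}"
proof -
  have "{a..b} = {(a - 1 + i) mod n + 1 | i. i < Suc b - a}"
  proof (rule set_eqI, rule iffI)
    fix x assume "x \<in> {a..b}"
    then have "x = (a - 1 + (x - a)) mod n + 1" "x - a < Suc b - a" using assms by auto
    then show "x \<in> {(a - 1 + i) mod n + 1 | i. i < Suc b - a}" by blast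
  next
    fix x assume "x \<in> {(a - 1 + i) mod n + 1 | i. i < Suc b - a}"
    then obtain i where i: "i < Suc b - a" "x = (a - 1 + i) mod n + 1" by blast
    then have "x = a + i" using assms by simp
    then show "x \<in> {a..b}" using i by auto
  qed
  moreover have "Suc b - a \<le> n" using assms by linarith
  ultimately show ?thesis unfolding cyc_interval_def by blast
qed

lemma nat_interval_imp_cyc_interval:
  assumes "nat_interval S" "S \<subseteq> {1..n}"
  shows "cyc_interval n S"
proof -
  obtain a b where S: "S = {a..b}" using assms(1) unfolding nat_interval_def by blast
  show ?thesis
  proof (cases "a \<le> b")
    case True
    then show ?thesis using S assms(2) cyc_interval_atLeastAtMost by auto
  next
    case False
    then show ?thesis using S cyc_interval_atLeastAtMost[of 1 0 n] by simp
  qed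
qed

lemma cyc_interval_imp_nat_interval:
  assumes "cyc_interval n S" "n \<notin> S"
  shows "nat_interval S"
proof -
  obtain a l where l: "l \<le> n" and S: "S = {(a + i) mod n + 1 | i. i < l}"
    using assms(1) unfolding cyc_interval_def by blast
  define b where "b = a mod n"
  have S': "S = {(b + i) mod n + 1 | i. i < l}" using S by (simp add: b_def mod_add_left_eq)
  consider "l = 0" | "b + l < n" | "0 < l" "n \<le> b + l" by linarith
  then show ?thesis
  proof cases
    case 1
    then show ?thesis using S by simp
  next
    case 2
    have "S = {b + 1..b + l}"
    proof (rule set_eqI, rule iffI)
      fix x assume "x \<in> S"
      then obtain i where "i < l" "x = (b + i) mod n + 1" using S' by blast
      then show "x \<in> {b + 1..b + l}" using 2 by auto
    next
      fix x assume "x \<in> {b + 1..b + l}"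
      then have "x - 1 - b < l" "x = (b + (x - 1 - b)) mod n + 1" using 2 by auto
      then show "x \<in> S" using S' by blast
    qed
    then show ?thesis by simp
  next
    case 3
    then have "n - 1 - b < l" "b < n" using l by (auto simp: b_def)
    moreover have "n = (b + (n - 1 - b)) mod n + 1" using \<open>b < n\<close> by simp
    ultimately have "n \<in> S" unfolding S' by blast
    then show ?thesis using assms(2) by simp
  qed
qed

lemma cyc_interval_avoiding_max:
  assumes "cyc_interval n S" "n \<notin> S"
  shows "nat_interval S \<and> S \<subseteq> {1..n - 1}"
proof
  show "nat_interval S" using assms by (rule cyc_interval_imp_nat_interval)
  show "S \<subseteq> {1..n - 1}"
  proof
    fix x assume "x \<in> S"
    then have "x \<in> {1..n}" "x \<noteq> n" using cyc_interval_subset[OF assms(1)] assms(2) by auto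
    then show "x \<in> {1..n - 1}" by auto
  qed
qed

lemma cyc_interval_Diff:
  assumes "cyc_interval n S"
  shows "cyc_interval n ({1..n} - S)"
proof -
  obtain a l where l: "l \<le> n" and S: "S = {(a + i) mod n + 1 | i. i < l}"
    using assms unfolding cyc_interval_def by blast
  define g where "g i = (a + i) mod n + 1" for i
  have inj: "inj_on g {0..<n}"
  proof
    fix i j assume ij: "i \<in> {0..<n}" "j \<in> {0..<n}" "g i = g j"
    then have "(a + i) mod n = (a + j) mod n" by (simp add: g_def)
    then have "i mod n = j mod n" by (simp add: nat_mod_eq_iff)
    then show "i = j" using ij by simp
  qed
  have img: "g ` {0..<n} = {1..n}"
  proof (rule card_subset_eq)
    show "finite {1..n}" by simp
    show "g ` {0..<n} \<subseteq> {1..n}" by (auto simp: g_def Suc_le_eq)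
    show "card (g ` {0..<n}) = card {1..n}" using card_image[OF inj] by simp
  qed
  have "{1..n} - S = g ` {0..<n} - g ` {0..<l}" using img S by (auto simp: g_def)
  also have "\<dots> = g ` ({0..<n} - {0..<l})"
    using inj l by (intro inj_on_image_set_diff[symmetric]) auto
  also have "{0..<n} - {0..<l} = {l..<n}" by auto
  also have "g ` {l..<n} = {(a + l + i) mod n + 1 | i. i < n - l}"
  proof (rule set_eqI, rule iffI)
    fix x assume "x \<in> g ` {l..<n}"
    then obtain j where "j \<in> {l..<n}" "x = g j" by blast
    then have "j - l < n - l" "x = (a + l + (j - l)) mod n + 1" by (auto simp: g_def)
    then show "x \<in> {(a + l + i) mod n + 1 | i. i < n - l}" by blast
  next
    fix x assume "x \<in> {(a + l + i) mod n + 1 | i. i < n - l}"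
    then obtain i where "i < n - l" "x = (a + l + i) mod n + 1" by blast
    then show "x \<in> g ` {l..<n}" unfolding g_def
      by (intro image_eqI[where x = "l + i"]) (auto simp: add.assoc)
  qed
  finally have "{1..n} - S = {(a + l + i) mod n + 1 | i. i < n - l}" .
  moreover have "n - l \<le> n" by simp
  ultimately show ?thesis unfolding cyc_interval_def by blast
qed

section \<open>Arc permutations\<close>

lemma arc_perms_permutes: "p \<in> arc_perms n \<Longrightarrow> p permutes {1..n}"
  unfolding arc_perms_def by blast

lemma arc_perms_cyc_interval: "p \<in> arc_perms n \<Longrightarrow> j \<in> {1..n} \<Longrightarrow> cyc_interval n (p ` {1..j})"
  unfolding arc_perms_def by blast

lemma cDes_perm_subset: "cDes_perm n p \<subseteq> {1..n}"
  unfolding cDes_perm_def by auto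

lemma mem_cDes_perm_less: "1 \<le> i \<Longrightarrow> i < n \<Longrightarrow> i \<in> cDes_perm n p \<longleftrightarrow> p (Suc i) < p i"
  unfolding cDes_perm_def by auto

lemma mem_cDes_perm_last: "1 \<le> n \<Longrightarrow> n \<in> cDes_perm n p \<longleftrightarrow> p 1 < p n"
  unfolding cDes_perm_def by auto

definition cyc_pred :: "nat \<Rightarrow> nat \<Rightarrow> nat" where
  "cyc_pred n v = (if v = 1 then n else v - 1)"

text \<open>The pairs (v, cDes \<pi>) with \<pi>(v) = n: the letter n, being maximal, forces a cyclic descent at
  its position and a cyclic ascent just before it.\<close>

definition admissible_pairs :: "nat \<Rightarrow> (nat \<times> nat set) set" where
  "admissible_pairs n = {(v, J). v \<in> {1..n} \<and> J \<subseteq> {1..n} \<and> v \<in> J \<and> cyc_pred n v \<notin> J}"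

lemma finite_admissible_pairs: "finite (admissible_pairs n)"
  by (rule finite_subset[of _ "{1..n} \<times> Pow {1..n}"]) (auto simp: admissible_pairs_def)

lemma cDes_perm_admissible:
  assumes p: "p permutes {1..n}" and n: "n \<ge> 2" and v: "v \<in> {1..n}" and max: "p v = n"
  shows "(v, cDes_perm n p) \<in> admissible_pairs n"
proof -
  have below: "p j < n" if "j \<in> {1..n}" "j \<noteq> v" for j
  proof -
    have "p j \<in> {1..n}" using permutes_in_image[OF p] that(1) by blast
    moreover have "p j \<noteq> p v" using permutes_inj_on[OF p] that v by (auto dest: inj_onD)
    ultimately show ?thesis using max by auto
  qed
  have "v \<in> cDes_perm n p"
  proof (cases "v = n")
    case True
    then show ?thesis using below[of 1] n max mem_cDes_perm_last[of n p] by auto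
  next
    case False
    then show ?thesis using below[of "Suc v"] v max mem_cDes_perm_less[of v n p] by auto
  qed
  moreover have "cyc_pred n v \<notin> cDes_perm n p"
  proof (cases "v = 1")
    case True
    then show ?thesis using below[of n] n max mem_cDes_perm_last[of n p] by (auto simp: cyc_pred_def)
  next
    case False
    then have "1 \<le> v - 1" "v - 1 < n" using v by auto
    then have "v - 1 \<in> cDes_perm n p \<longleftrightarrow> p v < p (v - 1)"
      using mem_cDes_perm_less[of "v - 1" n p] by simp
    moreover have "p (v - 1) < n" using below[of "v - 1"] \<open>1 \<le> v - 1\<close> v by auto
    ultimately show ?thesis using False max by (simp add: cyc_pred_def)
  qed
  ultimately show ?thesis using cDes_perm_subset v unfolding admissible_pairs_def by auto
qed

fun peel :: "(nat \<Rightarrow> bool) \<Rightarrow> nat set \<Rightarrow> nat \<Rightarrow> nat set" where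
  "peel b X 0 = X"
| "peel b X (Suc t) = peel b X t - {Min_or_Max (b t) (peel b X t)}"

lemma peel_interval:
  assumes "nat_interval X" "t \<le> card X"
  shows "nat_interval (peel b X t) \<and> peel b X t \<subseteq> X \<and> card (peel b X t) = card X - t"
  using assms(2)
proof (induction t)
  case (Suc t)
  let ?Y = "peel b X t"
  have Y: "nat_interval ?Y" "?Y \<subseteq> X" "card ?Y = card X - t" using Suc by auto
  then have "finite ?Y" "?Y \<noteq> {}" using Suc.prems nat_interval_finite by auto
  then have "Min_or_Max (b t) ?Y \<in> ?Y" by (rule Min_or_Max_in)
  then show ?case using Y nat_interval_Diff_Min_or_Max \<open>finite ?Y\<close> by (auto simp: card_Diff_singleton)
qed (simp add: assms(1))

text \<open>If \<pi>(v) = n and J = cDes \<pi>, the values \<pi>(1), ..., \<pi>(v-1) form the lower or the upper interval of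
  length v - 1 in [n-1], according to whether \<pi>(1) < \<pi>(n), i.e. n \<in> J.  The sets \<pi>{1..j} for j < v
  and \<pi>{j..n} for j > v are obtained from it by peeling off one letter at a time: \<pi>(j) is the
  minimum of its set exactly when it is smaller than its neighbour \<pi>(j-1) (for j < v),
  resp. \<pi>(j+1) (for j > v).\<close>

definition prefix_values :: "nat \<Rightarrow> nat \<Rightarrow> nat set \<Rightarrow> nat set" where
  "prefix_values n v J = (if n \<in> J then {1..v - 1} else {n + 1 - v..n - 1})"

definition arc_prefix :: "nat \<Rightarrow> nat \<Rightarrow> nat set \<Rightarrow> nat \<Rightarrow> nat set" where
  "arc_prefix n v J j = peel (\<lambda>t. v - t - 2 \<in> J) (prefix_values n v J) (v - 1 - j)"

definition arc_suffix :: "nat \<Rightarrow> nat \<Rightarrow> nat set \<Rightarrow> nat \<Rightarrow> nat set" where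
  "arc_suffix n v J j = peel (\<lambda>t. Suc v + t \<notin> J) ({1..n - 1} - prefix_values n v J) (j - Suc v)"

definition arc_perm_of :: "nat \<Rightarrow> nat \<Rightarrow> nat set \<Rightarrow> nat \<Rightarrow> nat" where
  "arc_perm_of n v J j =
    (if j = v then n
     else if 1 \<le> j \<and> j < v then Min_or_Max (j - 1 \<in> J) (arc_prefix n v J j)
     else if v < j \<and> j \<le> n then Min_or_Max (j \<notin> J) (arc_suffix n v J j)
     else j)"

lemma arc_perm_of_prefix:
  "1 \<le> j \<Longrightarrow> j < v \<Longrightarrow> arc_perm_of n v J j = Min_or_Max (j - 1 \<in> J) (arc_prefix n v J j)"
  unfolding arc_perm_of_def by simp

lemma arc_perm_of_suffix:
  "v < j \<Longrightarrow> j \<le> n \<Longrightarrow> arc_perm_of n v J j = Min_or_Max (j \<notin> J) (arc_suffix n v J j)"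
  unfolding arc_perm_of_def by simp

lemma arc_perm_of_at_max: "arc_perm_of n v J v = n"
  unfolding arc_perm_of_def by simp

lemma arc_prefix_step:
  assumes "Suc j < v"
  shows "arc_prefix n v J j = arc_prefix n v J (Suc j) - {arc_perm_of n v J (Suc j)}"
proof -
  have t: "v - 1 - j = Suc (v - 1 - Suc j)" and b: "v - (v - 1 - Suc j) - 2 = j" using assms by auto
  show ?thesis
    by (simp only: arc_perm_of_prefix[OF _ assms] arc_prefix_def t peel.simps b diff_Suc_1)
qed

lemma arc_suffix_step:
  assumes "v < j" "j \<le> n"
  shows "arc_suffix n v J (Suc j) = arc_suffix n v J j - {arc_perm_of n v J j}"
proof -
  have "Suc j - Suc v = Suc (j - Suc v)" "Suc v + (j - Suc v) = j" using assms by auto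
  then show ?thesis unfolding arc_suffix_def arc_perm_of_suffix[OF assms] by simp
qed

context
  fixes n v :: nat and J :: "nat set"
  assumes n: "n \<ge> 2" and adm: "(v, J) \<in> admissible_pairs n"
begin

lemma admissible_pairsD: "v \<in> {1..n}" "J \<subseteq> {1..n}" "v \<in> J" "cyc_pred n v \<notin> J"
  using adm unfolding admissible_pairs_def by auto

lemma prefix_values_interval:
  "nat_interval (prefix_values n v J)" "prefix_values n v J \<subseteq> {1..n - 1}"
  "card (prefix_values n v J) = v - 1"
  unfolding prefix_values_def using admissible_pairsD(1) by auto

lemma arc_prefix_interval:
  assumes "j \<le> v - 1"
  shows "nat_interval (arc_prefix n v J j) \<and> arc_prefix n v J j \<subseteq> prefix_values n v J
    \<and> card (arc_prefix n v J j) = j"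
  using peel_interval[OF prefix_values_interval(1), of "v - 1 - j"] assms prefix_values_interval(3)
  unfolding arc_prefix_def by auto

lemma arc_suffix_interval:
  assumes "v < j" "j \<le> Suc n"
  shows "nat_interval (arc_suffix n v J j) \<and> arc_suffix n v J j \<subseteq> {1..n - 1} - prefix_values n v J
    \<and> card (arc_suffix n v J j) = Suc n - j"
proof -
  have "{1..n - 1} - prefix_values n v J = (if n \<in> J then {v..n - 1} else {1..n - v})"
    unfolding prefix_values_def using admissible_pairsD(1) by auto
  then have "nat_interval ({1..n - 1} - prefix_values n v J)"
    "card ({1..n - 1} - prefix_values n v J) = n - v"
    using admissible_pairsD(1) by auto
  then show ?thesis using peel_interval[of _ "j - Suc v"] assms unfolding arc_suffix_def by auto
qed

lemma arc_perm_of_in_arc_prefix: "1 \<le> j \<Longrightarrow> j < v \<Longrightarrow> arc_perm_of n v J j \<in> arc_prefix n v J j"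
  using arc_prefix_interval[of j] nat_interval_finite Min_or_Max_in arc_perm_of_prefix by fastforce

lemma arc_perm_of_in_arc_suffix: "v < j \<Longrightarrow> j \<le> n \<Longrightarrow> arc_perm_of n v J j \<in> arc_suffix n v J j"
  using arc_suffix_interval[of j] nat_interval_finite Min_or_Max_in arc_perm_of_suffix by fastforce

lemma image_arc_perm_of_prefix: "j \<le> v - 1 \<Longrightarrow> arc_perm_of n v J ` {1..j} = arc_prefix n v J j"
proof (induction j)
  case 0
  then show ?case using arc_prefix_interval[of 0] nat_interval_finite by auto
next
  case (Suc j)
  then have "arc_perm_of n v J ` {1..Suc j} = insert (arc_perm_of n v J (Suc j)) (arc_prefix n v J j)"
    by (simp add: atLeastAtMostSuc_conv)
  then show ?case using arc_prefix_step[of j v n J] arc_perm_of_in_arc_prefix[of "Suc j"] Suc.prems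
    by auto
qed

lemma image_arc_perm_of_suffix:
  assumes "v < j" "j \<le> Suc n"
  shows "arc_perm_of n v J ` {j..n} = arc_suffix n v J j"
  using assms(2,1)
proof (induction j rule: inc_induct)
  case base
  then show ?case using arc_suffix_interval[of "Suc n"] admissible_pairsD(1) nat_interval_finite by auto
next
  case (step j)
  then have "arc_perm_of n v J ` {j..n} = insert (arc_perm_of n v J j) (arc_suffix n v J (Suc j))"
    by (simp add: atLeastAtMost_insertL[symmetric])
  then show ?case using arc_suffix_step[of v j n J] arc_perm_of_in_arc_suffix[of j] step.prems step.hyps
    by auto
qed

lemma image_arc_perm_of: "arc_perm_of n v J ` {1..n} = {1..n}"
proof -
  have "{1..n} = {1..v - 1} \<union> {v} \<union> {Suc v..n}" using admissible_pairsD(1) by auto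
  then have "arc_perm_of n v J ` {1..n} =
      arc_perm_of n v J ` {1..v - 1} \<union> {n} \<union> arc_perm_of n v J ` {Suc v..n}"
    by (simp only: image_Un image_insert image_empty arc_perm_of_at_max)
  also have "\<dots> = prefix_values n v J \<union> {n} \<union> ({1..n - 1} - prefix_values n v J)"
    using image_arc_perm_of_prefix[of "v - 1"] image_arc_perm_of_suffix[of "Suc v"]
      admissible_pairsD(1) by (simp add: arc_prefix_def arc_suffix_def)
  also have "\<dots> = {1..n}"
  proof -
    have "{1..n - 1} \<union> {n} = {1..n}" using n by auto
    then show ?thesis using prefix_values_interval(2) by blast
  qed
  finally show ?thesis .
qed

lemma arc_perm_of_permutes: "arc_perm_of n v J permutes {1..n}"
proof (rule bij_imp_permutes)
  have "inj_on (arc_perm_of n v J) {1..n}"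
    by (rule eq_card_imp_inj_on) (simp_all only: image_arc_perm_of finite_atLeastAtMost)
  then show "bij_betw (arc_perm_of n v J) {1..n} {1..n}"
    using image_arc_perm_of by (simp add: bij_betw_def)
next
  fix j assume "j \<notin> {1..n}"
  then show "arc_perm_of n v J j = j" using admissible_pairsD(1) unfolding arc_perm_of_def by auto
qed

lemma arc_perm_of_arc_perms: "arc_perm_of n v J \<in> arc_perms n"
  unfolding arc_perms_def
proof (intro CollectI conjI ballI arc_perm_of_permutes)
  fix j assume j: "j \<in> {1..n}"
  show "cyc_interval n (arc_perm_of n v J ` {1..j})"
  proof (cases "j < v")
    case True
    then have "j \<le> v - 1" by simp
    moreover have "{1..n - 1} \<subseteq> {1..n}" by auto
    ultimately have "nat_interval (arc_prefix n v J j)" "arc_prefix n v J j \<subseteq> {1..n}"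
      using arc_prefix_interval[of j] prefix_values_interval(2) by blast+
    then show ?thesis using image_arc_perm_of_prefix[of j] True nat_interval_imp_cyc_interval by simp
  next
    case False
    have "{1..j} = {1..n} - {Suc j..n}" using j by auto
    then have "arc_perm_of n v J ` {1..j} = arc_perm_of n v J ` ({1..n} - {Suc j..n})" by simp
    also have "\<dots> = arc_perm_of n v J ` {1..n} - arc_perm_of n v J ` {Suc j..n}"
      by (rule inj_on_image_set_diff[OF permutes_inj_on[OF arc_perm_of_permutes]]) auto
    also have "\<dots> = {1..n} - arc_perm_of n v J ` {Suc j..n}" by (simp only: image_arc_perm_of)
    also have "\<dots> = {1..n} - arc_suffix n v J (Suc j)"
      using image_arc_perm_of_suffix[of "Suc j"] False j by simp
    finally have image: "arc_perm_of n v J ` {1..j} = {1..n} - arc_suffix n v J (Suc j)" .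
    have "v < Suc j" "Suc j \<le> Suc n" using False j by auto
    note suffix = arc_suffix_interval[OF this]
    have "{1..n - 1} - prefix_values n v J \<subseteq> {1..n}" by auto
    then have "nat_interval (arc_suffix n v J (Suc j))" "arc_suffix n v J (Suc j) \<subseteq> {1..n}"
      using suffix by blast+
    then show ?thesis unfolding image by (intro cyc_interval_Diff nat_interval_imp_cyc_interval)
  qed
qed

lemma cDes_arc_perm_of_prefix:
  assumes "1 \<le> i" "Suc i < v"
  shows "i \<in> cDes_perm n (arc_perm_of n v J) \<longleftrightarrow> i \<in> J"
proof -
  let ?r = "arc_perm_of n v J" and ?X = "arc_prefix n v J (Suc i)"
  have "Suc i \<le> v - 1" using assms by simp
  then have fin: "finite ?X" using arc_prefix_interval nat_interval_finite by blast
  have "?r i \<in> arc_prefix n v J i" using arc_perm_of_in_arc_prefix assms by simp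
  then have "?r i \<in> ?X" "?r i \<noteq> ?r (Suc i)" using arc_prefix_step[OF assms(2)] by auto
  moreover have "?r (Suc i) = Min_or_Max (i \<in> J) ?X" using arc_perm_of_prefix[of "Suc i"] assms by simp
  ultimately have "?r (Suc i) < ?r i \<longleftrightarrow> i \<in> J" using Min_or_Max_less_iff[OF fin] by metis
  then show ?thesis using mem_cDes_perm_less[of i n] assms admissible_pairsD(1) by simp
qed

lemma cDes_arc_perm_of_suffix:
  assumes "v < i" "i < n"
  shows "i \<in> cDes_perm n (arc_perm_of n v J) \<longleftrightarrow> i \<in> J"
proof -
  let ?r = "arc_perm_of n v J" and ?X = "arc_suffix n v J i"
  have fin: "finite ?X" using arc_suffix_interval[of i] assms nat_interval_finite by simp
  have "?r (Suc i) \<in> arc_suffix n v J (Suc i)" using arc_perm_of_in_arc_suffix assms by simp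
  then have "?r (Suc i) \<in> ?X" "?r (Suc i) \<noteq> ?r i"
    using arc_suffix_step[of v i n J] assms by auto
  moreover have "?r i = Min_or_Max (i \<notin> J) ?X" using arc_perm_of_suffix[of v i n J] assms by simp
  ultimately have "?r i < ?r (Suc i) \<longleftrightarrow> i \<notin> J" using Min_or_Max_less_iff[OF fin] by metis
  moreover have "i \<in> cDes_perm n ?r \<longleftrightarrow> ?r (Suc i) < ?r i" using mem_cDes_perm_less[of i n] assms by simp
  ultimately show ?thesis using \<open>?r (Suc i) \<noteq> ?r i\<close> by (metis linorder_neqE_nat order.asym)
qed

lemma cDes_arc_perm_of_last:
  assumes "1 < v" "v < n"
  shows "n \<in> cDes_perm n (arc_perm_of n v J) \<longleftrightarrow> n \<in> J"
proof -
  let ?r = "arc_perm_of n v J"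
  have "1 \<le> v - 1" using assms by simp
  then have "?r 1 \<in> prefix_values n v J"
    using arc_perm_of_in_arc_prefix[of 1] arc_prefix_interval[of 1] assms by auto
  moreover have "?r n \<in> {1..n - 1} - prefix_values n v J"
    using arc_perm_of_in_arc_suffix[of n] arc_suffix_interval[of n] assms by auto
  ultimately have "?r 1 < ?r n \<longleftrightarrow> n \<in> J"
    unfolding prefix_values_def by (auto split: if_splits)
  then show ?thesis using mem_cDes_perm_last[of n] n by simp
qed

lemma cDes_arc_perm_of: "cDes_perm n (arc_perm_of n v J) = J"
proof (rule set_eqI)
  fix i
  let ?r = "arc_perm_of n v J"
  have max: "(v, cDes_perm n ?r) \<in> admissible_pairs n"
    using cDes_perm_admissible[OF arc_perm_of_permutes n] admissible_pairsD(1) arc_perm_of_at_max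
    by blast
  have "i \<notin> {1..n} \<or> i = v \<or> i = cyc_pred n v \<or> (1 \<le> i \<and> Suc i < v) \<or> (v < i \<and> i < n)
      \<or> (i = n \<and> 1 < v \<and> v < n)"
    using admissible_pairsD(1) unfolding cyc_pred_def by (cases "v = 1") auto
  then show "i \<in> cDes_perm n ?r \<longleftrightarrow> i \<in> J"
  proof (elim disjE conjE)
    assume "i \<notin> {1..n}"
    then show ?thesis using cDes_perm_subset admissible_pairsD(2) by blast
  next
    assume "i = v"
    then show ?thesis using max admissible_pairsD(3) unfolding admissible_pairs_def by simp
  next
    assume "i = cyc_pred n v"
    then show ?thesis using max admissible_pairsD(4) unfolding admissible_pairs_def by simp
  next
    assume "1 \<le> i" "Suc i < v"
    then show ?thesis by (rule cDes_arc_perm_of_prefix)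
  next
    assume "v < i" "i < n"
    then show ?thesis by (rule cDes_arc_perm_of_suffix)
  next
    assume "i = n" "1 < v" "v < n"
    then show ?thesis using cDes_arc_perm_of_last by blast
  qed
qed

end

lemma permutes_image_atLeastAtMost_Suc:
  assumes "p permutes {1..n}" "j \<le> n"
  shows "p ` {Suc j..n} = {1..n} - p ` {1..j}"
proof -
  have "{Suc j..n} = {1..n} - {1..j}" using assms(2) by auto
  then have "p ` {Suc j..n} = p ` ({1..n} - {1..j})" by simp
  also have "\<dots> = p ` {1..n} - p ` {1..j}"
    by (rule inj_on_image_set_diff[OF permutes_inj_on[OF assms(1)]]) (use assms(2) in auto)
  finally show ?thesis using permutes_image[OF assms(1)] by simp
qed

context
  fixes n v :: nat and p :: "nat \<Rightarrow> nat"
  assumes n: "n \<ge> 2" and arc: "p \<in> arc_perms n" and v: "v \<in> {1..n}" and max: "p v = n"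
begin

lemma arc_perm_inj: "inj_on p {1..n}"
  using permutes_inj_on[OF arc_perms_permutes[OF arc]] .

lemma arc_perm_image_remove:
  assumes "A \<subseteq> {1..n}" "j \<in> A"
  shows "p ` (A - {j}) = p ` A - {p j}"
proof -
  have "p ` (A - {j}) = p ` A - p ` {j}"
    by (rule inj_on_image_set_diff[OF arc_perm_inj]) (use assms in auto)
  then show ?thesis by simp
qed

lemma arc_perm_neq: "i \<in> {1..n} \<Longrightarrow> j \<in> {1..n} \<Longrightarrow> i \<noteq> j \<Longrightarrow> p i \<noteq> p j"
  using inj_onD[OF arc_perm_inj] by blast

lemma arc_perm_max_notin:
  assumes "A \<subseteq> {1..n}" "v \<notin> A"
  shows "n \<notin> p ` A"
proof
  assume "n \<in> p ` A"
  then obtain a where a: "a \<in> A" "p a = p v" using max by auto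
  then have "a \<in> {1..n}" "a \<noteq> v" using assms by auto
  then show False using arc_perm_neq v a(2) by blast
qed

lemma arc_perm_image_upto_max: "p ` {1..v} = insert n (p ` {1..v - 1})"
proof -
  have "{1..v} = insert v {1..v - 1}" using v by auto
  then show ?thesis using max by simp
qed

lemma arc_perm_prefix_interval:
  assumes "j < v"
  shows "nat_interval (p ` {1..j}) \<and> p ` {1..j} \<subseteq> {1..n - 1}"
proof (cases "j = 0")
  case False
  then have "j \<in> {1..n}" using assms v by simp
  then have "cyc_interval n (p ` {1..j})" by (rule arc_perms_cyc_interval[OF arc])
  moreover have "n \<notin> p ` {1..j}" using arc_perm_max_notin assms v by simp
  ultimately show ?thesis by (rule cyc_interval_avoiding_max)
qed simp

lemma arc_perm_suffix_interval:
  assumes "v < j" "j \<le> Suc n"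
  shows "nat_interval (p ` {j..n}) \<and> p ` {j..n} \<subseteq> {1..n - 1}"
proof -
  have "p ` {j..n} = {1..n} - p ` {1..j - 1}"
    using permutes_image_atLeastAtMost_Suc[OF arc_perms_permutes[OF arc], of "j - 1"] assms by simp
  moreover have "j - 1 \<in> {1..n}" using assms v by auto
  then have "cyc_interval n (p ` {1..j - 1})" by (rule arc_perms_cyc_interval[OF arc])
  ultimately have "cyc_interval n (p ` {j..n})" using cyc_interval_Diff by simp
  moreover have "n \<notin> p ` {j..n}" using arc_perm_max_notin assms by simp
  ultimately show ?thesis by (rule cyc_interval_avoiding_max)
qed

lemma arc_perm_prefix_letter:
  assumes "1 \<le> j" "j < v"
  shows "p j = Min_or_Max (j - 1 \<in> cDes_perm n p) (p ` {1..j})"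
proof (cases "j = 1")
  case True
  then show ?thesis by (simp add: Min_or_Max_def)
next
  case False
  have j: "j - 1 \<in> {1..n}" "j \<in> {1..n}" "Suc (j - 1) = j" using assms False v by auto
  have "{1..j - 1} = {1..j} - {j}" by auto
  also have "p ` \<dots> = p ` {1..j} - {p j}" using j by (intro arc_perm_image_remove) auto
  finally have "p j = Min_or_Max (p j < p (j - 1)) (p ` {1..j})"
    using arc_perm_prefix_interval[of j] arc_perm_prefix_interval[of "j - 1"] arc_perm_neq[OF j(1,2)]
      assms j by (intro nat_interval_Diff_singleton) auto
  moreover have "j - 1 \<in> cDes_perm n p \<longleftrightarrow> p j < p (j - 1)"
    using mem_cDes_perm_less[of "j - 1" n p] j v assms by simp
  ultimately show ?thesis by simp
qed

lemma arc_perm_suffix_letter: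
  assumes "v < j" "j \<le> n"
  shows "p j = Min_or_Max (j \<notin> cDes_perm n p) (p ` {j..n})"
proof (cases "j = n")
  case True
  then show ?thesis by (simp add: Min_or_Max_def)
next
  case False
  have j: "j \<in> {1..n}" "Suc j \<in> {1..n}" "1 \<le> j" "j < n" using assms False by auto
  have "{Suc j..n} = {j..n} - {j}" by auto
  also have "p ` \<dots> = p ` {j..n} - {p j}" using j by (intro arc_perm_image_remove) auto
  finally have "p j = Min_or_Max (p j < p (Suc j)) (p ` {j..n})"
    using arc_perm_suffix_interval[of j] arc_perm_suffix_interval[of "Suc j"] arc_perm_neq[OF j(2,1)]
      assms j by (intro nat_interval_Diff_singleton) auto
  moreover have "j \<in> cDes_perm n p \<longleftrightarrow> p (Suc j) < p j"
    using mem_cDes_perm_less[of j n p] j by simp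
  moreover have "p (Suc j) \<noteq> p j" using arc_perm_neq[OF j(2,1)] by simp
  ultimately have "p j < p (Suc j) \<longleftrightarrow> j \<notin> cDes_perm n p"
    by (metis linorder_neqE_nat order.asym)
  then show ?thesis using \<open>p j = Min_or_Max (p j < p (Suc j)) (p ` {j..n})\<close> by simp
qed

lemma arc_perm_after_max: "{1..n - 1} - p ` {1..v - 1} = p ` {Suc v..n}"
proof -
  have "p ` {1..v - 1} \<subseteq> {1..n - 1}" using arc_perm_prefix_interval[of "v - 1"] v by auto
  then show ?thesis
    using permutes_image_atLeastAtMost_Suc[OF arc_perms_permutes[OF arc], of v] v
      arc_perm_image_upto_max by auto
qed

lemma arc_perm_before_max_cases: "p ` {1..v - 1} = {1..v - 1} \<or> p ` {1..v - 1} = {n + 1 - v..n - 1}"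
proof -
  let ?X = "p ` {1..v - 1}"
  have X: "nat_interval ?X" "?X \<subseteq> {1..n - 1}" using arc_perm_prefix_interval[of "v - 1"] v by auto
  have "{1..v - 1} \<subseteq> {1..n}" using v by auto
  then have card: "card ?X = v - 1" using card_image[OF inj_on_subset[OF arc_perm_inj]] by simp
  have "nat_interval ({1..n - 1} - ?X)"
    using arc_perm_after_max arc_perm_suffix_interval[of "Suc v"] v by simp
  then have "?X = {1..card ?X} \<or> ?X = {Suc (n - 1) - card ?X..n - 1}"
    using nat_interval_complement_cases X by blast
  then show ?thesis using card v n by (simp add: Suc_diff_le)
qed

lemma arc_perm_prefix_values: "p ` {1..v - 1} = prefix_values n v (cDes_perm n p)"
proof -
  let ?X = "p ` {1..v - 1}"
  note low_or_high = arc_perm_before_max_cases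
  consider "v = 1" | "v = n" | "1 < v" "v < n" using v by fastforce
  then show ?thesis
  proof cases
    case 1
    then show ?thesis using n by (simp add: prefix_values_def)
  next
    case 2
    then have "n \<in> cDes_perm n p"
      using cDes_perm_admissible[OF arc_perms_permutes[OF arc] n v max] unfolding admissible_pairs_def
      by simp
    then show ?thesis using low_or_high 2 unfolding prefix_values_def by auto
  next
    case 3
    then have p1: "p 1 \<in> ?X" and pn: "p n \<in> {1..n - 1} - ?X" unfolding arc_perm_after_max by auto
    have last: "n \<in> cDes_perm n p \<longleftrightarrow> p 1 < p n" using mem_cDes_perm_last[of n p] n by simp
    from low_or_high show ?thesis
    proof
      assume low: "?X = {1..v - 1}"
      then have "p 1 < p n" using p1 pn by auto
      then show ?thesis using low last unfolding prefix_values_def by simp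
    next
      assume high: "?X = {n + 1 - v..n - 1}"
      then have "p n < p 1" using p1 pn by auto
      then show ?thesis using high last unfolding prefix_values_def by simp
    qed
  qed
qed

lemma arc_perm_image_prefix:
  assumes "j \<le> v - 1"
  shows "p ` {1..j} = arc_prefix n v (cDes_perm n p) j"
  using assms
proof (induction j rule: inc_induct)
  case base
  then show ?case using arc_perm_prefix_values by (simp add: arc_prefix_def)
next
  case (step m)
  let ?J = "cDes_perm n p"
  have "p (Suc m) = arc_perm_of n v ?J (Suc m)"
    using arc_perm_prefix_letter[of "Suc m"] arc_perm_of_prefix[of "Suc m" v n ?J] step by simp
  moreover have "p ` {1..m} = p ` {1..Suc m} - {p (Suc m)}"
  proof -
    have "p ` {1..m} = p ` ({1..Suc m} - {Suc m})" by (rule arg_cong[where f = "image p"]) auto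
    also have "\<dots> = p ` {1..Suc m} - {p (Suc m)}"
      by (rule arc_perm_image_remove) (use step v in auto)
    finally show ?thesis .
  qed
  ultimately show ?case using arc_prefix_step[of m v n ?J] step by simp
qed

lemma arc_perm_image_suffix:
  assumes "Suc v \<le> j" "j \<le> Suc n"
  shows "p ` {j..n} = arc_suffix n v (cDes_perm n p) j"
  using assms
proof (induction j rule: dec_induct)
  case base
  then show ?case
    using permutes_image_atLeastAtMost_Suc[OF arc_perms_permutes[OF arc], of v] v
      arc_perm_prefix_values arc_perm_image_upto_max by (auto simp: arc_suffix_def)
next
  case (step m)
  let ?J = "cDes_perm n p"
  have "p m = arc_perm_of n v ?J m"
    using arc_perm_suffix_letter[of m] arc_perm_of_suffix[of v m n ?J] step by simp
  moreover have "p ` {Suc m..n} = p ` {m..n} - {p m}"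
  proof -
    have "p ` {Suc m..n} = p ` ({m..n} - {m})" by (rule arg_cong[where f = "image p"]) auto
    also have "\<dots> = p ` {m..n} - {p m}" by (rule arc_perm_image_remove) (use step v in auto)
    finally show ?thesis .
  qed
  ultimately show ?case using arc_suffix_step[of v m n ?J] step by simp
qed

lemma arc_perm_eq_arc_perm_of: "p = arc_perm_of n v (cDes_perm n p)"
proof
  fix j
  consider "j = v" | "1 \<le> j" "j < v" | "v < j" "j \<le> n" | "j \<notin> {1..n}" using v by force
  then show "p j = arc_perm_of n v (cDes_perm n p) j"
  proof cases
    case 1
    then show ?thesis using max arc_perm_of_at_max by simp
  next
    case 2
    then show ?thesis using arc_perm_prefix_letter arc_perm_image_prefix[of j] arc_perm_of_prefix by simp
  next
    case 3
    then show ?thesis using arc_perm_suffix_letter arc_perm_image_suffix[of j] arc_perm_of_suffix by simp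
  next
    case 4
    then show ?thesis using permutes_not_in[OF arc_perms_permutes[OF arc]] v
      unfolding arc_perm_of_def by auto
  qed
qed

end

lemma arc_perms_inv_max:
  assumes "p \<in> arc_perms n" "n \<ge> 1"
  shows "inv p n \<in> {1..n}" "p (inv p n) = n"
proof -
  have "n \<in> {1..n}" using assms(2) by simp
  then show "inv p n \<in> {1..n}"
    using permutes_in_image[OF permutes_inv[OF arc_perms_permutes[OF assms(1)]]] by blast
  show "p (inv p n) = n" using permutes_inverses(1)[OF arc_perms_permutes[OF assms(1)]] .
qed

lemma arc_perms_bij_admissible_pairs:
  assumes n: "n \<ge> 2"
  shows "bij_betw (\<lambda>p. (inv p n, cDes_perm n p)) (arc_perms n) (admissible_pairs n)"
proof (rule bij_betw_byWitness[where f' = "\<lambda>(v, J). arc_perm_of n v J"])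
  have max: "inv p n \<in> {1..n}" "p (inv p n) = n" if "p \<in> arc_perms n" for p
    using arc_perms_inv_max[OF that] n by simp_all
  show "\<forall>p\<in>arc_perms n. (\<lambda>(v, J). arc_perm_of n v J) (inv p n, cDes_perm n p) = p"
  proof
    fix p assume p: "p \<in> arc_perms n"
    show "(\<lambda>(v, J). arc_perm_of n v J) (inv p n, cDes_perm n p) = p"
      using arc_perm_eq_arc_perm_of[OF n p max[OF p]] by simp
  qed
  show "(\<lambda>p. (inv p n, cDes_perm n p)) ` arc_perms n \<subseteq> admissible_pairs n"
  proof
    fix q assume "q \<in> (\<lambda>p. (inv p n, cDes_perm n p)) ` arc_perms n"
    then obtain p where p: "p \<in> arc_perms n" and q: "q = (inv p n, cDes_perm n p)" by blast
    show "q \<in> admissible_pairs n"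
      using cDes_perm_admissible[OF arc_perms_permutes[OF p] n max[OF p]] q by simp
  qed
  show "\<forall>q\<in>admissible_pairs n. (\<lambda>p. (inv p n, cDes_perm n p)) ((\<lambda>(v, J). arc_perm_of n v J) q) = q"
  proof
    fix q assume "q \<in> admissible_pairs n"
    then obtain v J where q: "q = (v, J)" and adm: "(v, J) \<in> admissible_pairs n" by (cases q) simp
    have "inv (arc_perm_of n v J) n = v"
      using permutes_inv_eq[OF arc_perm_of_permutes[OF n adm]] arc_perm_of_at_max by simp
    then show "(\<lambda>p. (inv p n, cDes_perm n p)) ((\<lambda>(v, J). arc_perm_of n v J) q) = q"
      using cDes_arc_perm_of[OF n adm] q by simp
  qed
  show "(\<lambda>(v, J). arc_perm_of n v J) ` admissible_pairs n \<subseteq> arc_perms n"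
  proof
    fix p assume "p \<in> (\<lambda>(v, J). arc_perm_of n v J) ` admissible_pairs n"
    then obtain v J where "(v, J) \<in> admissible_pairs n" "p = arc_perm_of n v J" by auto
    then show "p \<in> arc_perms n" using arc_perm_of_arc_perms[OF n] by simp
  qed
qed

lemma sum_arc_perms_cDes:
  assumes "n \<ge> 2"
  shows "(\<Sum>p\<in>arc_perms n. f (cDes_perm n p)) = (\<Sum>(v, J)\<in>admissible_pairs n. f J)"
proof -
  have "(\<Sum>(v, J)\<in>admissible_pairs n. f J) = (\<Sum>p\<in>arc_perms n. (\<lambda>(v, J). f J) (inv p n, cDes_perm n p))"
    by (rule sum.reindex_bij_betw[OF arc_perms_bij_admissible_pairs[OF assms], symmetric])
  then show ?thesis by simp
qed

section \<open>Standard Young tableaux of a hook plus a disjoint cell\<close>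

lemma sorted_list_of_set_eq_map:
  assumes mono: "\<And>i j. i < j \<Longrightarrow> j < N \<Longrightarrow> g i < g j" and image: "g ` {..<N} = S"
  shows "sorted_list_of_set S = map g [0..<N]"
proof -
  have "sorted_wrt (<) (map g [0..<N])" unfolding sorted_wrt_iff_nth_less using mono by auto
  moreover have "set (map g [0..<N]) = S" using image by auto
  ultimately show ?thesis
    using strict_sorted_equal[of "sorted_list_of_set S"] image by auto
qed

lemma sorted_list_of_set_nth_less:
  "finite S \<Longrightarrow> i < j \<Longrightarrow> j < card S \<Longrightarrow> sorted_list_of_set S ! i < sorted_list_of_set S ! j"
  using sorted_wrt_nth_less[OF strict_sorted_list_of_set] by simp

lemma image_sorted_list_of_set_nth:
  "finite S \<Longrightarrow> (\<lambda>i. sorted_list_of_set S ! i) ` {..<card S} = S"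
  by (metis image_set map_nth set_sorted_list_of_set length_sorted_list_of_set set_upt atLeast0LessThan)

lemma SYT_bij_betw: "T \<in> SYT n D \<Longrightarrow> bij_betw T D {1..n}"
  unfolding SYT_def by blast

lemma SYT_outside: "T \<in> SYT n D \<Longrightarrow> c \<notin> D \<Longrightarrow> T c = 0"
  unfolding SYT_def by blast

lemma SYT_row_less:
  "T \<in> SYT n D \<Longrightarrow> (r, c) \<in> D \<Longrightarrow> (r, c') \<in> D \<Longrightarrow> c < c' \<Longrightarrow> T (r, c) < T (r, c')"
  unfolding SYT_def by blast

lemma SYT_col_less:
  "T \<in> SYT n D \<Longrightarrow> (r, c) \<in> D \<Longrightarrow> (r', c) \<in> D \<Longrightarrow> r < r' \<Longrightarrow> T (r, c) < T (r', c)"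
  unfolding SYT_def by blast

lemma SYT_col_less_iff:
  assumes "T \<in> SYT n D" "(r, c) \<in> D" "(r', c) \<in> D"
  shows "T (r, c) < T (r', c) \<longleftrightarrow> r < r'"
  using SYT_col_less[OF assms(1)] assms(2,3) by (metis less_asym linorder_neqE_nat)

lemma row_of_SYT:
  assumes "T \<in> SYT n D" "p \<in> D"
  shows "row_of D T (T p) = fst p"
proof -
  have "inj_on T D" using SYT_bij_betw[OF assms(1)] by (simp add: bij_betw_def)
  then have "(THE q. q \<in> D \<and> T q = T p) = p" using assms(2) by (auto dest: inj_onD)
  then show ?thesis unfolding row_of_def by simp
qed

definition hook_arm :: "nat \<Rightarrow> nat \<Rightarrow> (nat \<times> nat) set" where
  "hook_arm n k = {(1, c) | c. 1 \<le> c \<and> c \<le> n - k - 1}"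

definition hook_leg :: "nat \<Rightarrow> (nat \<times> nat) set" where
  "hook_leg k = {(r, 1) | r. 2 \<le> r \<and> r \<le> k + 1}"

lemma mem_hook_arm: "(r, c) \<in> hook_arm n k \<longleftrightarrow> r = 1 \<and> 1 \<le> c \<and> c \<le> n - k - 1"
  unfolding hook_arm_def by auto

lemma mem_hook_leg: "(r, c) \<in> hook_leg k \<longleftrightarrow> c = 1 \<and> 2 \<le> r \<and> r \<le> k + 1"
  unfolding hook_leg_def by auto

lemma mem_hook_plus_cell:
  "(r, c) \<in> hook_plus_cell n k \<longleftrightarrow>
    (r = 1 \<and> 1 \<le> c \<and> c \<le> n - k - 1) \<or> (c = 1 \<and> 2 \<le> r \<and> r \<le> k + 1) \<or> (r, c) = (0, n - k)"
  unfolding hook_plus_cell_def by auto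

lemma hook_plus_cell_eq: "hook_plus_cell n k = hook_arm n k \<union> hook_leg k \<union> {(0, n - k)}"
  unfolding hook_plus_cell_def hook_arm_def hook_leg_def by blast

lemma hook_parts_subset:
  "hook_arm n k \<subseteq> hook_plus_cell n k" "hook_leg k \<subseteq> hook_plus_cell n k" "(0, n - k) \<in> hook_plus_cell n k"
  unfolding hook_plus_cell_eq by auto

lemma hook_corner_in_arm: "k + 2 \<le> n \<Longrightarrow> (1, 1) \<in> hook_arm n k"
  by (simp add: mem_hook_arm)

lemma hook_cells_disjoint:
  "hook_arm n k \<inter> hook_leg k = {}" "(0, n - k) \<notin> hook_arm n k" "(0, n - k) \<notin> hook_leg k"
  unfolding hook_arm_def hook_leg_def by auto

lemma hook_arm_eq_image: "hook_arm n k = (\<lambda>c. (1, Suc c)) ` {..<n - k - 1}"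
proof -
  have "(1, c) \<in> (\<lambda>c. (1, Suc c)) ` {..<n - k - 1}" if "1 \<le> c" "c \<le> n - k - 1" for c
    using that by (intro image_eqI[of _ _ "c - 1"]) auto
  then show ?thesis unfolding hook_arm_def by auto
qed

lemma hook_leg_eq_image: "hook_leg k = (\<lambda>r. (r + 2, 1)) ` {..<k}"
proof -
  have "(r, 1) \<in> (\<lambda>r. (r + 2, 1)) ` {..<k}" if "2 \<le> r" "r \<le> k + 1" for r
    using that by (intro image_eqI[of _ _ "r - 2"]) auto
  then show ?thesis unfolding hook_leg_def by auto
qed

lemma card_hook_plus_cell:
  assumes "k + 2 \<le> n"
  shows "card (hook_plus_cell n k) = n"
proof -
  have "card (hook_arm n k) = n - k - 1" "card (hook_leg k) = k"
    unfolding hook_arm_eq_image hook_leg_eq_image by (simp_all add: card_image inj_on_def)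
  moreover note hook_cells_disjoint
  moreover have "finite (hook_arm n k)" "finite (hook_leg k)"
    unfolding hook_arm_eq_image hook_leg_eq_image by simp_all
  ultimately show ?thesis using assms unfolding hook_plus_cell_eq by (simp add: card_Un_disjoint)
qed

text \<open>A tableau of shape (n-k-1, 1^k) \<oplus> (1) is determined by the entry v of the single cell and the
  set L of entries of the leg: the arm receives the remaining values in increasing order.  The last
  condition says that the corner (1, 1), which gets the least remaining value, is smaller than the
  entries of the leg below it.\<close>

definition hook_data :: "nat \<Rightarrow> nat \<Rightarrow> (nat \<times> nat set) set" where
  "hook_data n k = {(v, L). v \<in> {1..n} \<and> L \<subseteq> {2..n} - {v} \<and> card L = k \<and> (v = 1 \<longrightarrow> 2 \<notin> L)}"

lemma hook_dataD:
  assumes "(v, L) \<in> hook_data n k"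
  shows "v \<in> {1..n}" "L \<subseteq> {2..n} - {v}" "card L = k" "v = 1 \<Longrightarrow> 2 \<notin> L"
  using assms unfolding hook_data_def by auto

definition hook_tableau :: "nat \<Rightarrow> nat \<Rightarrow> nat \<Rightarrow> nat set \<Rightarrow> nat \<times> nat \<Rightarrow> nat" where
  "hook_tableau n k v L p =
    (if p = (0, n - k) then v
     else if p \<in> hook_arm n k then sorted_list_of_set ({1..n} - L - {v}) ! (snd p - 1)
     else if p \<in> hook_leg k then sorted_list_of_set L ! (fst p - 2)
     else 0)"

text \<open>Besides v (unless v = n), the descents of such a tableau are the i with i + 1 in the leg; there
  are k of those, so the cyclic descent n is added exactly when v is not a descent.\<close>

definition hook_cDes :: "nat \<Rightarrow> nat \<Rightarrow> nat set \<Rightarrow> nat set" where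
  "hook_cDes n v L = insert (if v = n \<or> Suc v \<in> L then n else v) {i. Suc i \<in> L}"

lemma image_Suc_preimage:
  assumes "0 \<notin> L"
  shows "Suc ` {i. Suc i \<in> L} = L"
proof
  show "L \<subseteq> Suc ` {i. Suc i \<in> L}"
  proof
    fix x assume "x \<in> L"
    moreover obtain i where "x = Suc i" using assms \<open>x \<in> L\<close> by (cases x) auto
    ultimately show "x \<in> Suc ` {i. Suc i \<in> L}" by blast
  qed
qed auto

lemma card_Suc_preimage:
  assumes "0 \<notin> L"
  shows "card {i. Suc i \<in> L} = card L"
proof -
  have "card (Suc ` {i. Suc i \<in> L}) = card {i. Suc i \<in> L}" by (rule card_image) simp
  then show ?thesis using image_Suc_preimage[OF assms] by simp
qed

lemma hook_data_descents:
  assumes "(v, L) \<in> hook_data n k"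
  shows "{i. Suc i \<in> L} \<subseteq> {1..n - 1}" "card {i. Suc i \<in> L} = k" "finite {i. Suc i \<in> L}"
proof -
  have L: "L \<subseteq> {2..n}" "card L = k" using hook_dataD[OF assms] by auto
  show "{i. Suc i \<in> L} \<subseteq> {1..n - 1}"
  proof
    fix i assume "i \<in> {i. Suc i \<in> L}"
    then have "Suc i \<in> {2..n}" using L(1) by blast
    then show "i \<in> {1..n - 1}" by auto
  qed
  then show "finite {i. Suc i \<in> L}" using finite_subset by blast
  have "0 \<notin> L" using L(1) by auto
  then show "card {i. Suc i \<in> L} = k" using card_Suc_preimage L(2) by simp
qed

context
  fixes n k :: nat and T :: "nat \<times> nat \<Rightarrow> nat"
  assumes k: "k + 2 \<le> n" and T: "T \<in> SYT n (hook_plus_cell n k)"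
begin

lemma hook_SYT_inj: "inj_on T (hook_plus_cell n k)"
  using SYT_bij_betw[OF T] by (simp add: bij_betw_def)

lemma hook_SYT_image: "T ` hook_plus_cell n k = {1..n}"
  using SYT_bij_betw[OF T] by (simp add: bij_betw_def)

lemma hook_SYT_corner_less_leg:
  assumes "p \<in> hook_leg k"
  shows "T (1, 1) < T p"
proof -
  obtain r where p: "p = (r, 1)" "2 \<le> r" using assms by (auto simp: hook_leg_def)
  have "(1, 1) \<in> hook_plus_cell n k" "p \<in> hook_plus_cell n k"
    using hook_corner_in_arm[OF k] hook_parts_subset assms by blast+
  then show ?thesis using SYT_col_less[OF T] p by simp
qed

lemma hook_SYT_in_range: "p \<in> hook_plus_cell n k \<Longrightarrow> T p \<in> {1..n}"
  using hook_SYT_image by blast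

lemma hook_corner_in_hook: "(1, 1) \<in> hook_plus_cell n k"
  using hook_corner_in_arm[OF k] hook_parts_subset(1) by blast

lemma hook_SYT_leg_values:
  assumes p: "p \<in> hook_leg k"
  shows "T p \<in> {2..n} - {T (0, n - k)}"
proof -
  have pD: "p \<in> hook_plus_cell n k" using hook_parts_subset p by blast
  have "1 \<le> T (1, 1)" using hook_SYT_in_range[OF hook_corner_in_hook] by simp
  moreover have "T (1, 1) < T p" "T p \<le> n" using hook_SYT_corner_less_leg hook_SYT_in_range pD p by auto
  moreover have "p \<noteq> (0, n - k)" using p hook_cells_disjoint by blast
  then have "T p \<noteq> T (0, n - k)" using inj_on_eq_iff[OF hook_SYT_inj pD] hook_parts_subset by blast
  ultimately show ?thesis by auto
qed

lemma hook_SYT_data: "(T (0, n - k), T ` hook_leg k) \<in> hook_data n k"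
proof -
  let ?v = "T (0, n - k)" and ?L = "T ` hook_leg k"
  have "?L \<subseteq> {2..n} - {?v}" using hook_SYT_leg_values by (rule image_subsetI)
  moreover have "card ?L = k"
    using card_image[OF inj_on_subset[OF hook_SYT_inj hook_parts_subset(2)]] hook_leg_eq_image
    by (simp add: card_image inj_on_def)
  moreover have "2 \<notin> ?L" if "?v = 1"
  proof
    assume "2 \<in> ?L"
    then obtain p where "p \<in> hook_leg k" "T p = 2" by auto
    then have "T (1, 1) < 2" using hook_SYT_corner_less_leg by metis
    then have "T (1, 1) = ?v" using hook_SYT_in_range[OF hook_corner_in_hook] that by simp
    then show False
      using inj_on_eq_iff[OF hook_SYT_inj hook_corner_in_hook hook_parts_subset(3)] by simp
  qed
  ultimately show ?thesis using hook_SYT_in_range hook_parts_subset(3) unfolding hook_data_def by blast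
qed

lemma hook_SYT_arm_image: "T ` hook_arm n k = {1..n} - T ` hook_leg k - {T (0, n - k)}"
proof -
  have "hook_arm n k = hook_plus_cell n k - (hook_leg k \<union> {(0, n - k)})"
    unfolding hook_plus_cell_eq using hook_cells_disjoint by blast
  then have "T ` hook_arm n k = T ` (hook_plus_cell n k - (hook_leg k \<union> {(0, n - k)}))" by simp
  also have "\<dots> = T ` hook_plus_cell n k - T ` (hook_leg k \<union> {(0, n - k)})"
    by (rule inj_on_image_set_diff[OF hook_SYT_inj Diff_subset]) (unfold hook_plus_cell_eq, blast)
  also have "\<dots> = {1..n} - (T ` hook_leg k \<union> {T (0, n - k)})" by (simp add: hook_SYT_image)
  also have "\<dots> = {1..n} - T ` hook_leg k - {T (0, n - k)}" by blast
  finally show ?thesis .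
qed

lemma sorted_list_of_set_hook_SYT_arm:
  "sorted_list_of_set ({1..n} - T ` hook_leg k - {T (0, n - k)}) = map (\<lambda>i. T (1, Suc i)) [0..<n - k - 1]"
proof (rule sorted_list_of_set_eq_map)
  show "T (1, Suc i) < T (1, Suc j)" if "i < j" "j < n - k - 1" for i j
    using that SYT_row_less[OF T] unfolding hook_plus_cell_eq by (simp add: mem_hook_arm)
  show "(\<lambda>i. T (1, Suc i)) ` {..<n - k - 1} = {1..n} - T ` hook_leg k - {T (0, n - k)}"
    using hook_SYT_arm_image unfolding hook_arm_eq_image by (simp add: image_image)
qed

lemma sorted_list_of_set_hook_SYT_leg:
  "sorted_list_of_set (T ` hook_leg k) = map (\<lambda>i. T (i + 2, 1)) [0..<k]"
proof (rule sorted_list_of_set_eq_map)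
  show "T (i + 2, 1) < T (j + 2, 1)" if "i < j" "j < k" for i j
    using that SYT_col_less[OF T] unfolding hook_plus_cell_eq by (simp add: mem_hook_leg)
  show "(\<lambda>i. T (i + 2, 1)) ` {..<k} = T ` hook_leg k"
    unfolding hook_leg_eq_image by (simp add: image_image)
qed

lemma hook_tableau_of_SYT: "hook_tableau n k (T (0, n - k)) (T ` hook_leg k) = T"
proof
  fix p
  let ?v = "T (0, n - k)" and ?L = "T ` hook_leg k"
  consider "p = (0, n - k)" | "p \<in> hook_arm n k" | "p \<in> hook_leg k" | "p \<notin> hook_plus_cell n k"
    unfolding hook_plus_cell_eq by blast
  then show "hook_tableau n k ?v ?L p = T p"
  proof cases
    case 1
    then show ?thesis unfolding hook_tableau_def by simp
  next
    case 2
    then obtain c where p: "p = (1, c)" "1 \<le> c" "c \<le> n - k - 1" by (auto simp: hook_arm_def)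
    moreover have "c - 1 < n - k - 1" "Suc (c - 1) = c" using p by auto
    ultimately show ?thesis using 2 sorted_list_of_set_hook_SYT_arm unfolding hook_tableau_def by simp
  next
    case 3
    then obtain r where p: "p = (r, 1)" "2 \<le> r" "r \<le> k + 1" by (auto simp: hook_leg_def)
    moreover have "p \<notin> hook_arm n k" "r - 2 + 2 = r" using p by (auto simp: mem_hook_arm)
    ultimately show ?thesis using 3 sorted_list_of_set_hook_SYT_leg unfolding hook_tableau_def by simp
  next
    case 4
    then have "p \<noteq> (0, n - k)" "p \<notin> hook_arm n k" "p \<notin> hook_leg k" unfolding hook_plus_cell_eq by auto
    then show ?thesis using SYT_outside[OF T 4] unfolding hook_tableau_def by simp
  qed
qed

lemma hook_SYT_row_less_iff:
  assumes a: "a \<in> hook_plus_cell n k" and b: "b \<in> hook_plus_cell n k" and less: "T a < T b"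
  shows "fst a < fst b \<longleftrightarrow> b \<in> hook_leg k \<or> a = (0, n - k)"
proof (cases "b \<in> hook_leg k")
  case True
  then obtain r where r: "b = (r, 1)" "2 \<le> r" by (auto simp: hook_leg_def)
  have "fst a < r"
  proof (cases "a \<in> hook_leg k")
    case True
    then obtain r' where "a = (r', 1)" by (auto simp: hook_leg_def)
    then show ?thesis using SYT_col_less_iff[OF T] a b r less by simp
  next
    case False
    then have "fst a \<le> 1" using a unfolding hook_plus_cell_eq by (auto simp: hook_arm_def)
    then show ?thesis using r by simp
  qed
  then show ?thesis using True r by simp
next
  case False
  have cases_b: "b \<in> hook_arm n k \<or> b = (0, n - k)" using b False unfolding hook_plus_cell_eq by blast
  then have "fst b \<le> 1" by (auto simp: hook_arm_def)
  show ?thesis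
  proof (cases "a = (0, n - k)")
    case True
    then have "b \<noteq> (0, n - k)" using less by auto
    then show ?thesis using cases_b True by (auto simp: hook_arm_def)
  next
    case False
    then have "1 \<le> fst a" using a unfolding hook_plus_cell_eq by (auto simp: hook_arm_def hook_leg_def)
    then show ?thesis using \<open>fst b \<le> 1\<close> \<open>b \<notin> hook_leg k\<close> False by auto
  qed
qed

lemma Des_T_hook:
  "Des_T n (hook_plus_cell n k) T = {i \<in> {1..n - 1}. Suc i \<in> T ` hook_leg k \<or> i = T (0, n - k)}"
proof (rule set_eqI)
  fix i
  show "i \<in> Des_T n (hook_plus_cell n k) T \<longleftrightarrow>
      i \<in> {i \<in> {1..n - 1}. Suc i \<in> T ` hook_leg k \<or> i = T (0, n - k)}"
  proof (cases "i \<in> {1..n - 1}")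
    case True
    then have "i \<in> {1..n}" "Suc i \<in> {1..n}" by auto
    then obtain a b where a: "a \<in> hook_plus_cell n k" "T a = i"
      and b: "b \<in> hook_plus_cell n k" "T b = Suc i"
      using hook_SYT_image by (metis imageE)
    have "row_of (hook_plus_cell n k) T i = fst a" "row_of (hook_plus_cell n k) T (Suc i) = fst b"
      using row_of_SYT[OF T a(1)] row_of_SYT[OF T b(1)] a(2) b(2) by simp_all
    then have "i \<in> Des_T n (hook_plus_cell n k) T \<longleftrightarrow> fst a < fst b"
      using True unfolding Des_T_def by simp
    also have "\<dots> \<longleftrightarrow> b \<in> hook_leg k \<or> a = (0, n - k)"
      using hook_SYT_row_less_iff a b by simp
    also have "\<dots> \<longleftrightarrow> Suc i \<in> T ` hook_leg k \<or> i = T (0, n - k)"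
      using inj_on_image_mem_iff[OF hook_SYT_inj b(1) hook_parts_subset(2)]
        inj_on_eq_iff[OF hook_SYT_inj a(1) hook_parts_subset(3)]
        a(2) b(2) by simp
    finally show ?thesis using True by simp
  qed (auto simp: Des_T_def)
qed

lemma cDes_T_hook: "cDes_T n k T = hook_cDes n (T (0, n - k)) (T ` hook_leg k)"
proof -
  let ?v = "T (0, n - k)" and ?L = "T ` hook_leg k"
  let ?E = "{i. Suc i \<in> ?L}"
  have E: "?E \<subseteq> {1..n - 1}" "card ?E = k" "finite ?E" using hook_data_descents[OF hook_SYT_data] by auto
  have v: "?v \<in> {1..n}" using hook_dataD(1)[OF hook_SYT_data] .
  have Des: "Des_T n (hook_plus_cell n k) T = {i \<in> {1..n - 1}. i \<in> ?E \<or> i = ?v}"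
    using Des_T_hook by simp
  show ?thesis
  proof (cases "?v = n \<or> Suc ?v \<in> ?L")
    case True
    then have "Des_T n (hook_plus_cell n k) T = ?E" unfolding Des using E(1) by auto
    then show ?thesis using True E(2) unfolding cDes_T_def hook_cDes_def by simp
  next
    case False
    then have "Des_T n (hook_plus_cell n k) T = insert ?v ?E" unfolding Des using E(1) v by auto
    moreover have "card (insert ?v ?E) = Suc k" using False E by simp
    ultimately show ?thesis using False unfolding cDes_T_def hook_cDes_def by simp
  qed
qed

end

context
  fixes n k v :: nat and L :: "nat set"
  assumes k: "k + 2 \<le> n" and data: "(v, L) \<in> hook_data n k"
begin

lemma finite_hook_data: "finite L"
  using hook_dataD(2)[OF data] finite_subset by blast

lemma card_hook_arm_values: "card ({1..n} - L - {v}) = n - k - 1"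
proof -
  have "{1..n} - L - {v} = {1..n} - insert v L" by blast
  moreover have "insert v L \<subseteq> {1..n}" using hook_dataD(1,2)[OF data] by auto
  moreover have "v \<notin> L" using hook_dataD(2)[OF data] by blast
  then have "card (insert v L) = Suc k" using hook_dataD(3)[OF data] finite_hook_data by simp
  ultimately show ?thesis by (simp add: card_Diff_subset finite_hook_data)
qed

lemma hook_tableau_arm: "1 \<le> c \<Longrightarrow> c \<le> n - k - 1 \<Longrightarrow>
    hook_tableau n k v L (1, c) = sorted_list_of_set ({1..n} - L - {v}) ! (c - 1)"
  unfolding hook_tableau_def by (simp add: mem_hook_arm)

lemma hook_tableau_leg: "2 \<le> r \<Longrightarrow> r \<le> k + 1 \<Longrightarrow>
    hook_tableau n k v L (r, 1) = sorted_list_of_set L ! (r - 2)"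
  unfolding hook_tableau_def by (simp add: mem_hook_arm mem_hook_leg)

lemma image_hook_tableau_arm: "hook_tableau n k v L ` hook_arm n k = {1..n} - L - {v}"
proof -
  let ?R = "{1..n} - L - {v}"
  have "hook_tableau n k v L ` hook_arm n k = (\<lambda>i. sorted_list_of_set ?R ! i) ` {..<n - k - 1}"
    unfolding hook_arm_eq_image image_image using hook_tableau_arm by (intro image_cong) auto
  also have "{..<n - k - 1} = {..<card ?R}" using card_hook_arm_values by simp
  also have "(\<lambda>i. sorted_list_of_set ?R ! i) ` {..<card ?R} = ?R"
    by (rule image_sorted_list_of_set_nth) simp
  finally show ?thesis .
qed

lemma image_hook_tableau_leg: "hook_tableau n k v L ` hook_leg k = L"
proof -
  have "hook_tableau n k v L ` hook_leg k = (\<lambda>i. sorted_list_of_set L ! i) ` {..<k}"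
    unfolding hook_leg_eq_image image_image using hook_tableau_leg by (intro image_cong) auto
  then show ?thesis using image_sorted_list_of_set_nth[OF finite_hook_data] hook_dataD(3)[OF data] by simp
qed

lemma hook_tableau_corner_less: "l \<in> L \<Longrightarrow> hook_tableau n k v L (1, 1) < l"
proof -
  assume l: "l \<in> L"
  let ?R = "{1..n} - L - {v}"
  obtain y where y: "y \<in> ?R" "y < l"
  proof (cases "v = 1")
    case True
    have "l \<in> {2..n}" "l \<noteq> 2" using hook_dataD(2,4)[OF data] True l by auto
    moreover have "2 \<in> ?R" using hook_dataD(2,4)[OF data] True k by auto
    ultimately show ?thesis using that[of 2] by simp
  next
    case False
    have "l \<in> {2..n}" using hook_dataD(2)[OF data] l by auto
    moreover have "1 \<in> ?R" using hook_dataD(1,2)[OF data] False by auto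
    ultimately show ?thesis using that[of 1] by simp
  qed
  then have "?R \<noteq> {}" by blast
  then have "sorted_list_of_set ?R ! 0 = Min ?R" by (simp add: sorted_list_of_set_nonempty)
  then have "hook_tableau n k v L (1, 1) \<le> y" using hook_tableau_arm[of 1] k y(1) by simp
  then show ?thesis using y(2) by simp
qed

lemma hook_tableau_bij_betw: "bij_betw (hook_tableau n k v L) (hook_plus_cell n k) {1..n}"
proof -
  let ?T = "hook_tableau n k v L"
  have "?T ` hook_plus_cell n k = ({1..n} - L - {v}) \<union> L \<union> {v}"
    unfolding hook_plus_cell_eq image_Un image_hook_tableau_arm image_hook_tableau_leg
    by (simp add: hook_tableau_def)
  also have "\<dots> = {1..n}" using hook_dataD(1,2)[OF data] by auto
  finally have image: "?T ` hook_plus_cell n k = {1..n}" .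
  moreover have "inj_on ?T (hook_plus_cell n k)"
    using image card_hook_plus_cell[OF k] by (intro eq_card_imp_inj_on) (simp_all add: hook_plus_cell_def)
  ultimately show ?thesis by (simp add: bij_betw_def)
qed

lemma hook_tableau_in_SYT: "hook_tableau n k v L \<in> SYT n (hook_plus_cell n k)"
  unfolding SYT_def
proof (intro CollectI conjI allI impI hook_tableau_bij_betw)
  let ?T = "hook_tableau n k v L" and ?R = "{1..n} - L - {v}"
  show "?T p = 0" if "p \<notin> hook_plus_cell n k" for p
    using that unfolding hook_tableau_def hook_plus_cell_eq by auto
  show "?T (r, c) < ?T (r, c')"
    if "(r, c) \<in> hook_plus_cell n k \<and> (r, c') \<in> hook_plus_cell n k \<and> c < c'" for r c c'
  proof -
    have c: "r = 1" "1 \<le> c" "c < c'" "c' \<le> n - k - 1" using that by (auto simp: mem_hook_plus_cell)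
    have "sorted_list_of_set ?R ! (c - 1) < sorted_list_of_set ?R ! (c' - 1)"
      by (rule sorted_list_of_set_nth_less) (use c card_hook_arm_values in auto)
    then show ?thesis using hook_tableau_arm c by simp
  qed
  show "?T (r, c) < ?T (r', c)"
    if "(r, c) \<in> hook_plus_cell n k \<and> (r', c) \<in> hook_plus_cell n k \<and> r < r'" for r r' c
  proof -
    have r': "c = 1" "2 \<le> r'" "r' \<le> k + 1" using that k by (auto simp: mem_hook_plus_cell)
    then have "(r', c) \<in> hook_leg k" by (simp add: mem_hook_leg)
    then have leg: "?T (r', c) \<in> L" using image_hook_tableau_leg by blast
    show ?thesis
    proof (cases "r = 1")
      case True
      then show ?thesis using hook_tableau_corner_less[OF leg] r'(1) by simp
    next
      case False
      then have r: "2 \<le> r" "r < r'" using that r' k by (auto simp: mem_hook_plus_cell)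
      have "sorted_list_of_set L ! (r - 2) < sorted_list_of_set L ! (r' - 2)"
        by (rule sorted_list_of_set_nth_less[OF finite_hook_data]) (use r r' hook_dataD(3)[OF data] in auto)
      then show ?thesis using hook_tableau_leg r r' by simp
    qed
  qed
qed

end

lemma SYT_hook_bij_hook_data:
  assumes k: "k + 2 \<le> n"
  shows "bij_betw (\<lambda>T. (T (0, n - k), T ` hook_leg k)) (SYT n (hook_plus_cell n k)) (hook_data n k)"
proof (rule bij_betw_byWitness[where f' = "\<lambda>(v, L). hook_tableau n k v L"])
  show "\<forall>T\<in>SYT n (hook_plus_cell n k). (\<lambda>(v, L). hook_tableau n k v L) (T (0, n - k), T ` hook_leg k) = T"
    using hook_tableau_of_SYT[OF k] by simp
  show "\<forall>q\<in>hook_data n k. (\<lambda>T. (T (0, n - k), T ` hook_leg k)) ((\<lambda>(v, L). hook_tableau n k v L) q) = q"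
  proof
    fix q assume "q \<in> hook_data n k"
    then obtain v L where q: "q = (v, L)" and data: "(v, L) \<in> hook_data n k" by (cases q) simp
    show "(\<lambda>T. (T (0, n - k), T ` hook_leg k)) ((\<lambda>(v, L). hook_tableau n k v L) q) = q"
      using image_hook_tableau_leg[OF k data] q by (simp add: hook_tableau_def)
  qed
  show "(\<lambda>T. (T (0, n - k), T ` hook_leg k)) ` SYT n (hook_plus_cell n k) \<subseteq> hook_data n k"
    using hook_SYT_data[OF k] by blast
  show "(\<lambda>(v, L). hook_tableau n k v L) ` hook_data n k \<subseteq> SYT n (hook_plus_cell n k)"
    using hook_tableau_in_SYT[OF k] by auto
qed

text \<open>The descents of J other than the one that hook_cDes adds; shifted up by one they are the leg.\<close>

definition leg_descents :: "nat \<Rightarrow> nat \<times> nat set \<Rightarrow> nat set" where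
  "leg_descents n = (\<lambda>(v, J). if n \<in> J then J - {n} else J - {v})"

lemma hook_data_le:
  assumes "(v, L) \<in> hook_data n k"
  shows "k \<le> n - 2"
proof -
  note L = hook_dataD(2,3,1,4)[OF assms]
  show ?thesis
  proof (cases "v = 1")
    case True
    have "L \<subseteq> {3..n}"
    proof
      fix l assume "l \<in> L"
      then have "l \<in> {2..n}" "l \<noteq> 2" using L(1,4) True by auto
      then show "l \<in> {3..n}" by auto
    qed
    then show ?thesis using card_mono[of "{3..n}" L] L(2) by simp
  next
    case False
    then have "card ({2..n} - {v}) = n - 2" using L(3) by simp
    then show ?thesis using card_mono[of "{2..n} - {v}" L] L(1,2) by simp
  qed
qed

lemma leg_descents_hook_cDes:
  assumes "(v, L) \<in> hook_data n k"
  shows "leg_descents n (v, hook_cDes n v L) = {i. Suc i \<in> L}"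
proof -
  have "n \<notin> {i. Suc i \<in> L}" using hook_dataD(2)[OF assms] by auto
  then show ?thesis unfolding leg_descents_def hook_cDes_def by auto
qed

lemma hook_cDes_admissible:
  assumes n: "n \<ge> 2" and data: "(v, L) \<in> hook_data n k"
  shows "(v, hook_cDes n v L) \<in> admissible_pairs n"
proof -
  note L = hook_dataD(2,1,4)[OF data]
  have E: "1 \<le> i \<and> i < n" if "Suc i \<in> L" for i using subsetD[OF L(1) that] by auto
  have "hook_cDes n v L \<subseteq> {1..n}" using E L(2) unfolding hook_cDes_def by fastforce
  moreover have "v \<in> hook_cDes n v L" unfolding hook_cDes_def by auto
  moreover have "cyc_pred n v \<notin> hook_cDes n v L"
  proof (cases "v = 1")
    case True
    then show ?thesis using E L(3) n unfolding hook_cDes_def cyc_pred_def by (auto simp: numeral_2_eq_2)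
  next
    case False
    then show ?thesis using E L(1,2) unfolding hook_cDes_def cyc_pred_def by auto
  qed
  ultimately show ?thesis using L(2) unfolding admissible_pairs_def by simp
qed

context
  fixes n v :: nat and J :: "nat set"
  assumes n: "n \<ge> 2" and adm: "(v, J) \<in> admissible_pairs n"
begin

lemma leg_descents_range: "i \<in> leg_descents n (v, J) \<Longrightarrow> 1 \<le> i \<and> i < n \<and> i \<in> J"
proof -
  assume i: "i \<in> leg_descents n (v, J)"
  then have "i \<in> J" "i \<noteq> n" unfolding leg_descents_def by (auto split: if_splits)
  then show ?thesis using admissible_pairsD(2)[OF n adm] by fastforce
qed

lemma leg_descents_hook_data:
  "(v, Suc ` leg_descents n (v, J)) \<in> hook_data n (card (leg_descents n (v, J)))"
proof -
  let ?E = "leg_descents n (v, J)"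
  have "Suc ` ?E \<subseteq> {2..n}" using leg_descents_range by fastforce
  moreover have "v \<notin> Suc ` ?E"
  proof
    assume "v \<in> Suc ` ?E"
    then have "v - 1 \<in> J" "v \<noteq> 1" using leg_descents_range by auto
    then show False using admissible_pairsD(4)[OF n adm] unfolding cyc_pred_def by simp
  qed
  moreover have "2 \<notin> Suc ` ?E" if "v = 1"
    using that admissible_pairsD(4)[OF n adm] unfolding leg_descents_def cyc_pred_def by auto
  moreover have "card (Suc ` ?E) = card ?E" by (simp add: card_image)
  ultimately show ?thesis using admissible_pairsD(1)[OF n adm] unfolding hook_data_def by auto
qed

lemma hook_cDes_leg_descents: "hook_cDes n v (Suc ` leg_descents n (v, J)) = J"
proof -
  have "{i. Suc i \<in> Suc ` leg_descents n (v, J)} = leg_descents n (v, J)" by auto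
  then show ?thesis
    using admissible_pairsD(1,3)[OF n adm] unfolding hook_cDes_def leg_descents_def by auto
qed

end

lemma hook_data_bij_admissible_pairs:
  assumes n: "n \<ge> 2"
  shows "bij_betw (\<lambda>(v, L). (v, hook_cDes n v L)) (hook_data n k)
    {q \<in> admissible_pairs n. card (leg_descents n q) = k}"
proof (rule bij_betw_byWitness[where f' = "\<lambda>(v, J). (v, Suc ` leg_descents n (v, J))"])
  show "\<forall>q\<in>hook_data n k. (\<lambda>(v, J). (v, Suc ` leg_descents n (v, J))) ((\<lambda>(v, L). (v, hook_cDes n v L)) q) = q"
  proof
    fix q assume "q \<in> hook_data n k"
    then obtain v L where q: "q = (v, L)" and data: "(v, L) \<in> hook_data n k" by (cases q) simp
    have "0 \<notin> L" using hook_dataD(2)[OF data] by auto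
    then have "Suc ` leg_descents n (v, hook_cDes n v L) = L"
      using leg_descents_hook_cDes[OF data] image_Suc_preimage by simp
    then show "(\<lambda>(v, J). (v, Suc ` leg_descents n (v, J))) ((\<lambda>(v, L). (v, hook_cDes n v L)) q) = q"
      using q by simp
  qed
  show "\<forall>q\<in>{q \<in> admissible_pairs n. card (leg_descents n q) = k}.
      (\<lambda>(v, L). (v, hook_cDes n v L)) ((\<lambda>(v, J). (v, Suc ` leg_descents n (v, J))) q) = q"
    using hook_cDes_leg_descents[OF n] by auto
  show "(\<lambda>(v, L). (v, hook_cDes n v L)) ` hook_data n k \<subseteq> {q \<in> admissible_pairs n. card (leg_descents n q) = k}"
  proof
    fix q assume "q \<in> (\<lambda>(v, L). (v, hook_cDes n v L)) ` hook_data n k"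
    then obtain v L where q: "q = (v, hook_cDes n v L)" and data: "(v, L) \<in> hook_data n k" by auto
    have "card (leg_descents n (v, hook_cDes n v L)) = k"
      using leg_descents_hook_cDes[OF data] hook_data_descents(2)[OF data] by simp
    then show "q \<in> {q \<in> admissible_pairs n. card (leg_descents n q) = k}"
      using hook_cDes_admissible[OF n data] q by simp
  qed
  show "(\<lambda>(v, J). (v, Suc ` leg_descents n (v, J))) ` {q \<in> admissible_pairs n. card (leg_descents n q) = k}
      \<subseteq> hook_data n k"
    using leg_descents_hook_data[OF n] by auto
qed

lemma card_leg_descents_le: "n \<ge> 2 \<Longrightarrow> q \<in> admissible_pairs n \<Longrightarrow> card (leg_descents n q) \<le> n - 2"
  using leg_descents_hook_data hook_data_le by (cases q) blast

lemma sum_SYT_hook_cDes: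
  assumes k: "k + 2 \<le> n"
  shows "(\<Sum>T\<in>SYT n (hook_plus_cell n k). f (cDes_T n k T)) =
    (\<Sum>(v, J)\<in>{q \<in> admissible_pairs n. card (leg_descents n q) = k}. f J)"
proof -
  have "(\<Sum>T\<in>SYT n (hook_plus_cell n k). f (cDes_T n k T)) =
      (\<Sum>T\<in>SYT n (hook_plus_cell n k). (\<lambda>(v, L). f (hook_cDes n v L)) (T (0, n - k), T ` hook_leg k))"
    using cDes_T_hook[OF k] by simp
  also have "\<dots> = (\<Sum>(v, L)\<in>hook_data n k. f (hook_cDes n v L))"
    by (rule sum.reindex_bij_betw[OF SYT_hook_bij_hook_data[OF k]])
  also have "\<dots> = (\<Sum>q\<in>hook_data n k. (\<lambda>(v, J). f J) ((\<lambda>(v, L). (v, hook_cDes n v L)) q))"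
    by (simp add: case_prod_unfold)
  also have "\<dots> = (\<Sum>(v, J)\<in>{q \<in> admissible_pairs n. card (leg_descents n q) = k}. f J)"
    using k by (intro sum.reindex_bij_betw hook_data_bij_admissible_pairs) simp
  finally show ?thesis .
qed

theorem theorem6p11:
  fixes n :: nat and x :: "nat \<Rightarrow> 'a::comm_ring_1"
  assumes "n \<ge> 2"
  shows "(\<Sum>\<pi>\<in>arc_perms n. monom_x x (cDes_perm n \<pi>)) =
         (\<Sum>k = 0..n - 2. \<Sum>T\<in>SYT n (hook_plus_cell n k). monom_x x (cDes_T n k T))"
proof -
  have "(\<Sum>k = 0..n - 2. \<Sum>T\<in>SYT n (hook_plus_cell n k). monom_x x (cDes_T n k T)) =
      (\<Sum>k = 0..n - 2. \<Sum>(v, J)\<in>{q \<in> admissible_pairs n. card (leg_descents n q) = k}. monom_x x J)"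
    using assms by (intro sum.cong refl sum_SYT_hook_cDes) auto
  also have "\<dots> = (\<Sum>(v, J)\<in>admissible_pairs n. monom_x x J)"
    by (rule sum.group) (use finite_admissible_pairs card_leg_descents_le[OF assms] in auto)
  also have "\<dots> = (\<Sum>\<pi>\<in>arc_perms n. monom_x x (cDes_perm n \<pi>))"
    by (rule sum_arc_perms_cDes[OF assms, symmetric])
  finally show ?thesis ..
qed

end
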